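(* Under the hypotheses of the preceding proposition (equation for Whiting's transform) and assuming moreover $\operatorname{Im}\omega>0$, the transform $\tilde u$ satisfies, with $x^*=r^*(x)$ and primes denoting $d/dx^*$: (1) $\tilde u=O\big((x-r_+)^{2M\operatorname{Im}\omega}\big)$ and (2) $\tilde u'=O\big((x-r_+)^{2M\operatorname{Im}\omega}\big)$ as $x\to r_+$; (3) $\tilde u=O\big(e^{-\operatorname{Im}(\omega)x}x^{1+2M\operatorname{Im}\omega}\big)$ and (4) $\tilde u'=O\big(e^{-\operatorname{Im}(\omega)x}x^{1+2M\operatorname{Im}\omega}\big)$ as $x\to\infty$.
   Context: Fix $M>0$ and $a\in\mathbb{R}$ with $|a|<M$. Let $r_\pm:=M\pm\sqrt{M^2-a^2}$ and $\Delta(r):=r^2-2Mr+a^2=(r-r_+)(r-r_-)$. Let $r^*:(r_+,\infty)\to(-\infty,\infty)$ be a fixed increasing bijection with $\frac{dr^*}{dr}=\frac{r^2+a^2}{\Delta}$; a prime $'$ denotes $d/dr^*$. Complex powers $(r-r_\pm)^c$ mean $e^{c\log(r-r_\pm)}$ with the real logarithm. Radial ODE: given $\omega,m,\lambda$, set $V:=\frac{4Mram\omega-a^2m^2+\Delta(\lambda+a^2\omega^2)}{(r^2+a^2)^2}+\frac{\Delta}{(r^2+a^2)^4}\big(a^2\Delta+2Mr(r^2-a^2)\big)$. Hypotheses: $\omega\in\mathbb{C}$, $m\in\mathbb{Z}$, $\lambda\in\mathbb{C}$, $F$ smooth and compactly supported in $(r_+,\infty)$ (possibly $0$), $u$ solves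 $u''+(\omega^2-V)u=\frac{\Delta}{(r^2+a^2)^{1/2}}F$ and satisfies the mode boundary conditions: with $\xi:=\frac{i(am-2Mr_+\omega)}{r_+-r_-}$, (i) $(r-r_+)^{-\xi}u$ extends smoothly in $r$ to $r=r_+$; (ii) for constants $C_i$ and every $N$, $u=e^{i\omega r^*}\sum_{i=0}^NC_ir^{-i}+O(r^{-N-1})$ as $r\to\infty$. $R:=(r^2+a^2)^{-1/2}u$. Whiting's transform: with $\eta:=\frac{-i(am-2Mr_-\omega)}{r_+-r_-}$, $\tilde u(x^* ):=(x^2+a^2)^{1/2}(x-r_+)^{-2iM\omega}e^{-i\omega x}\int_{r_+}^\infty e^{\frac{2i\omega}{r_+-r_-}(x-r_-)(r-r_-)}(r-r_-)^{\eta}(r-r_+)^{\xi}e^{-i\omega r}R(r)\,dr$, $x\in(r_+,\infty)$, $x^*=r^*(x)$. *)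

theory Defs
  imports "HOL-Analysis.Analysis"
begin

definition rplus :: "real \<Rightarrow> real \<Rightarrow> real" where
  "rplus M a = M + sqrt (M^2 - a^2)"

definition rminus :: "real \<Rightarrow> real \<Rightarrow> real" where
  "rminus M a = M - sqrt (M^2 - a^2)"

definition Delta :: "real \<Rightarrow> real \<Rightarrow> real \<Rightarrow> real" where
  "Delta M a r = r^2 - 2*M*r + a^2"

definition cpow :: "real \<Rightarrow> complex \<Rightarrow> complex" where
  "cpow x c = exp (c * complex_of_real (ln x))"

definition smooth_fun :: "(real \<Rightarrow> 'a::real_normed_vector) \<Rightarrow> bool" where
  "smooth_fun f \<longleftrightarrow> (\<exists>D :: nat \<Rightarrow> real \<Rightarrow> 'a. D 0 = f \<and>
      (\<forall>k x. (D k has_vector_derivative D (Suc k) x) (at x)))"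

definition Vpot :: "real \<Rightarrow> real \<Rightarrow> complex \<Rightarrow> int \<Rightarrow> complex \<Rightarrow> real \<Rightarrow> complex" where
  "Vpot M a \<omega> m lam r =
     (complex_of_real (4*M*r*a*real_of_int m) * \<omega> - complex_of_real (a^2 * (real_of_int m)^2)
        + complex_of_real (Delta M a r) * (lam + complex_of_real (a^2) * \<omega>^2)) / complex_of_real ((r^2 + a^2)^2)
     + complex_of_real (Delta M a r / (r^2 + a^2)^4
        * (a^2 * Delta M a r + 2*M*r*(r^2 - a^2)))"

definition xi_exp :: "real \<Rightarrow> real \<Rightarrow> complex \<Rightarrow> int \<Rightarrow> complex" where
  "xi_exp M a \<omega> m = \<i> * (complex_of_real (a * real_of_int m) - complex_of_real (2*M*rplus M a) * \<omega>) / complex_of_real (rplus M a - rminus M a)"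

definition eta_exp :: "real \<Rightarrow> real \<Rightarrow> complex \<Rightarrow> int \<Rightarrow> complex" where
  "eta_exp M a \<omega> m = - \<i> * (complex_of_real (a * real_of_int m) - complex_of_real (2*M*rminus M a) * \<omega>) / complex_of_real (rplus M a - rminus M a)"

text \<open>Whiting's transform, as a function of x \<in> (r_+,\<infinity>) (its value at x* = r*(x)).
  Here rs is the tortoise coordinate r* and u is a function of r*; R(r) = (r^2+a^2)^(-1/2) u(r*(r)).\<close>
definition whiting :: "real \<Rightarrow> real \<Rightarrow> complex \<Rightarrow> int \<Rightarrow> (real \<Rightarrow> real) \<Rightarrow> (real \<Rightarrow> complex)
    \<Rightarrow> real \<Rightarrow> complex" where
  "whiting M a \<omega> m rs u x =
     complex_of_real (sqrt (x^2 + a^2)) * cpow (x - rplus M a) (- 2 * \<i> * complex_of_real M * \<omega>)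
     * exp (- \<i> * \<omega> * complex_of_real x)
     * (LINT r:{rplus M a<..}|lborel.
          exp (2 * \<i> * \<omega> / complex_of_real (rplus M a - rminus M a)
                 * complex_of_real ((x - rminus M a) * (r - rminus M a)))
          * cpow (r - rminus M a) (eta_exp M a \<omega> m)
          * cpow (r - rplus M a) (xi_exp M a \<omega> m)
          * exp (- \<i> * \<omega> * complex_of_real r)
          * (complex_of_real (1 / sqrt (r^2 + a^2)) * u (rs r)))"

end

theory Submission
  imports Defs "HOL-Real_Asymp.Real_Asymp"
begin

text \<open>Write the transform as A(x) I(x) with the explicit prefactor
  A(x) = sqrt(x^2+a^2) (x-r_+)^(-2iM\<omega>) e^(-i\<omega>x) and the kernel integral
  I(x) = \<integral> exp(c (x-r_-)(r-r_-)) g(r) dr, c = 2i\<omega>/(r_+-r_-). Since Re c < 0 and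
  (x-r_-)(r-r_-) \<ge> (r_+-r_-)((x-r_+)+(r-r_+)), the kernel is bounded by
  e^(-2 Im \<omega> (x-r_+)) e^(-2 Im \<omega> (r-r_+)). The integrand grows at most like e^((Im \<omega>+\<epsilon>)(r-r_+)):
  e^(-i\<omega>r) contributes e^(Im \<omega> r), while the boundary conditions make (r-r_-)^\<eta> (r-r_+)^\<xi> R(r)
  bounded near r_+ and bounded at infinity up to polynomial factors. Hence I and its derivative,
  obtained by differentiating under the integral sign, are O(e^(-2 Im \<omega> x)), and multiplying by
  |A(x)| = sqrt(x^2+a^2) (x-r_+)^(2M Im \<omega>) e^(Im \<omega> x) gives all four bounds; for the x*-derivative
  the factor \<Delta>/(x^2+a^2) absorbs the singular terms of A'/A.\<close>

lemma norm_exp_minus_one_minus_le: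
  fixes z :: complex
  shows "norm (exp z - 1 - z) \<le> exp (norm z) * norm z ^ 2"
proof -
  have "norm (exp z - (\<Sum>i\<le>1. z ^ i / fact i)) \<le> exp (norm z) * (norm z ^ Suc 1) / fact 1"
    by (rule Taylor_exp_field)
  moreover have "(\<Sum>i\<le>1. z ^ i / fact i) = 1 + z" by (simp add: atMost_Suc)
  ultimately show ?thesis by (simp add: diff_diff_eq power2_eq_square)
qed

lemma set_integrable_exp_decay:
  assumes "\<alpha> > 0"
  shows "set_integrable lborel {t<..} (\<lambda>r::real. exp (-\<alpha> * (r - t)))"
proof -
  have "(\<lambda>r. exp (-\<alpha> * (r - t))) = (\<lambda>r. exp (\<alpha> * t) * exp (-\<alpha> * r))"
    by (auto simp: mult_exp_exp algebra_simps)
  with integrable_on_exp_minus_to_infinity[OF assms]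
  have "(\<lambda>r. exp (-\<alpha> * (r - t))) integrable_on {t..}" by simp
  hence "(\<lambda>r. exp (-\<alpha> * (r - t))) absolutely_integrable_on {t..}"
    by (intro nonnegative_absolutely_integrable_1) auto
  hence "set_integrable lborel {t..} (\<lambda>r. exp (-\<alpha> * (r - t)))"
    unfolding set_integrable_def
    by (subst (asm) integrable_completion)
       (auto intro!: borel_measurable_continuous_on_indicator continuous_intros)
  thus ?thesis by (rule set_integrable_subset) auto
qed

lemma set_integrable_continuous_bound:
  fixes f :: "real \<Rightarrow> 'a::{banach, second_countable_topology}"
  assumes S: "S \<in> sets borel" and f: "continuous_on S f" and D: "set_integrable lborel S D"
    and bound: "\<And>r. r \<in> S \<Longrightarrow> norm (f r) \<le> D r"
  shows "set_integrable lborel S f"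
    and "norm (LINT r:S|lborel. f r) \<le> (LINT r:S|lborel. D r)"
proof -
  show int: "set_integrable lborel S f"
    using set_measurable_continuous_on[OF S f] bound
    by (intro set_integrable_bound[OF D]) (auto simp: set_borel_measurable_def
        intro!: AE_I2 order.trans[OF _ abs_ge_self])
  have "norm (LINT r:S|lborel. f r) \<le> (LINT r:S|lborel. norm (f r))"
    by (rule set_integral_norm_bound[OF int])
  also have "\<dots> \<le> (LINT r:S|lborel. D r)"
    using int D bound by (intro set_integral_mono) (auto simp: set_integrable_norm)
  finally show "norm (LINT r:S|lborel. f r) \<le> (LINT r:S|lborel. D r)" .
qed

text \<open>The factors exp(\<delta> |k|) and (1 + |k|)^2 make D dominate, for |h| \<le> \<delta>, the integrand exp(h k) f,
  its h-derivative k f and the Taylor remainder of exp(h k), so one majorant suffices to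
  differentiate under the integral sign.\<close>
locale exp_family_majorant =
  fixes S :: "real set" and f k :: "real \<Rightarrow> complex" and D :: "real \<Rightarrow> real" and \<delta> :: real
  assumes S: "S \<in> sets borel" and f: "continuous_on S f" and k: "continuous_on S k"
    and D: "set_integrable lborel S D" and \<delta>: "\<delta> > 0"
    and major: "\<And>r. r \<in> S \<Longrightarrow> norm (f r) * exp (\<delta> * norm (k r)) * (1 + norm (k r))^2 \<le> D r"
begin

lemma norm_exp_family_le:
  assumes "\<bar>h\<bar> \<le> \<delta>"
  shows "norm (exp (of_real h * k r) * f r) \<le> norm (f r) * exp (\<delta> * norm (k r))"
proof -
  have "norm (exp (of_real h * k r)) \<le> exp (\<bar>h\<bar> * norm (k r))"
    using norm_exp[of "of_real h * k r"] by (simp add: norm_mult)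
  also have "\<dots> \<le> exp (\<delta> * norm (k r))" using assms by (auto intro: mult_right_mono)
  finally show ?thesis by (simp add: norm_mult mult.commute mult_left_mono)
qed

lemma set_integrable_exp_family:
  assumes "\<bar>h\<bar> \<le> \<delta>"
  shows "set_integrable lborel S (\<lambda>r. exp (of_real h * k r) * f r)"
proof (rule set_integrable_continuous_bound(1)[OF S _ D])
  show "continuous_on S (\<lambda>r. exp (of_real h * k r) * f r)" by (intro continuous_intros f k)
  fix r assume r: "r \<in> S"
  have "norm (exp (of_real h * k r) * f r) \<le> norm (f r) * exp (\<delta> * norm (k r)) * 1"
    using norm_exp_family_le[OF assms] by simp
  also have "\<dots> \<le> norm (f r) * exp (\<delta> * norm (k r)) * (1 + norm (k r))^2"
    by (intro mult_left_mono) (auto simp: power2_eq_square algebra_simps)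
  finally show "norm (exp (of_real h * k r) * f r) \<le> D r" using major[OF r] by linarith
qed

lemma set_integrable_mult_k:
  "set_integrable lborel S (\<lambda>r. k r * f r)"
proof (rule set_integrable_continuous_bound(1)[OF S _ D])
  show "continuous_on S (\<lambda>r. k r * f r)" by (intro continuous_intros f k)
  fix r assume r: "r \<in> S"
  have "norm (k r * f r) = norm (f r) * 1 * norm (k r)" by (simp add: norm_mult)
  also have "\<dots> \<le> norm (f r) * exp (\<delta> * norm (k r)) * (1 + norm (k r))^2"
    using \<delta> by (intro mult_mono mult_left_mono) (auto simp: power2_eq_square algebra_simps)
  finally show "norm (k r * f r) \<le> D r" using major[OF r] by linarith
qed

lemma set_integral_exp_family_remainder:
  assumes h: "\<bar>h\<bar> \<le> \<delta>"
  shows "norm ((LINT r:S|lborel. exp (of_real h * k r) * f r) - (LINT r:S|lborel. f r)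
               - of_real h * (LINT r:S|lborel. k r * f r)) \<le> h^2 * (LINT r:S|lborel. D r)"
proof -
  have int_0: "set_integrable lborel S f" using set_integrable_exp_family[of 0] \<delta> by simp
  have int_hk: "set_integrable lborel S (\<lambda>r. of_real h * (k r * f r))" using set_integrable_mult_k by simp
  have "(LINT r:S|lborel. exp (of_real h * k r) * f r) - (LINT r:S|lborel. f r)
          - of_real h * (LINT r:S|lborel. k r * f r)
      = (LINT r:S|lborel. exp (of_real h * k r) * f r - f r - of_real h * (k r * f r))"
    by (simp add: set_integral_diff(2)[OF set_integral_diff(1)[OF set_integrable_exp_family[OF h] int_0] int_hk]
                  set_integral_diff(2)[OF set_integrable_exp_family[OF h] int_0])
  also have "norm \<dots> \<le> (LINT r:S|lborel. h^2 * D r)"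
  proof (rule set_integrable_continuous_bound(2)[OF S _ set_integrable_mult_right[OF D]])
    show "continuous_on S (\<lambda>r. exp (of_real h * k r) * f r - f r - of_real h * (k r * f r))"
      by (intro continuous_intros f k)
    fix r assume r: "r \<in> S"
    have "norm (exp (of_real h * k r) * f r - f r - of_real h * (k r * f r))
        = norm (f r) * norm (exp (of_real h * k r) - 1 - of_real h * k r)"
      by (simp add: norm_mult algebra_simps flip: norm_mult)
    also have "\<dots> \<le> norm (f r) * (exp (\<bar>h\<bar> * norm (k r)) * (\<bar>h\<bar> * norm (k r))^2)"
      using norm_exp_minus_one_minus_le[of "of_real h * k r"] by (simp add: norm_mult mult_left_mono)
    also have "\<dots> = h^2 * (norm (f r) * exp (\<bar>h\<bar> * norm (k r)) * norm (k r)^2)"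
      by (simp add: power_mult_distrib ac_simps)
    also have "\<dots> \<le> h^2 * (norm (f r) * exp (\<delta> * norm (k r)) * (1 + norm (k r))^2)"
      using h by (intro mult_left_mono mult_mono) (auto intro: mult_right_mono simp: power2_eq_square algebra_simps)
    also have "\<dots> \<le> h^2 * D r" using major[OF r] by (intro mult_left_mono) auto
    finally show "norm (exp (of_real h * k r) * f r - f r - of_real h * (k r * f r)) \<le> h^2 * D r" .
  qed
  finally show ?thesis by simp
qed

lemma has_vector_derivative_set_integral_exp_family:
  "((\<lambda>t. LINT r:S|lborel. exp (of_real (t - x) * k r) * f r)
      has_vector_derivative (LINT r:S|lborel. k r * f r)) (at x)"
proof -
  define I where "I = (\<lambda>t. LINT r:S|lborel. exp (of_real (t - x) * k r) * f r)"
  define J L where "J = (LINT r:S|lborel. k r * f r)" and "L = (LINT r:S|lborel. D r)"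
  have err: "norm (I (x + h) - I x - h *\<^sub>R J) \<le> h^2 * L" if "\<bar>h\<bar> \<le> \<delta>" for h
    using set_integral_exp_family_remainder[OF that] by (simp add: I_def J_def L_def scaleR_conv_of_real)
  have "((\<lambda>h. norm (I (x + h) - I x - h *\<^sub>R J) / norm h) \<longlongrightarrow> 0) (at 0)"
  proof (rule tendsto_sandwich[where f = "\<lambda>h. 0" and h = "\<lambda>h. \<bar>h\<bar> * L"])
    have "norm (I (x + h) - I x - h *\<^sub>R J) / norm h \<le> \<bar>h\<bar> * L" if "h \<noteq> 0" "\<bar>h\<bar> < \<delta>" for h
    proof -
      have "norm (I (x + h) - I x - h *\<^sub>R J) \<le> (\<bar>h\<bar> * L) * \<bar>h\<bar>"
        using err[of h] that by (simp add: power2_eq_square ac_simps)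
      thus ?thesis using that by (simp add: divide_le_eq)
    qed
    thus "\<forall>\<^sub>F h in at 0. norm (I (x + h) - I x - h *\<^sub>R J) / norm h \<le> \<bar>h\<bar> * L"
      unfolding eventually_at using \<delta> by (auto intro!: exI[of _ \<delta>])
    show "((\<lambda>h. \<bar>h\<bar> * L) \<longlongrightarrow> 0) (at 0)" by (auto intro!: tendsto_eq_intros)
  qed auto
  hence "(I has_vector_derivative J) (at x)"
    unfolding has_vector_derivative_def has_derivative_at by (auto intro: bounded_linear_scaleR_left)
  thus ?thesis unfolding I_def J_def .
qed

end

lemma exp_bound_of_local_bounds:
  fixes h :: "real \<Rightarrow> 'a::real_normed_vector"
  assumes cont: "continuous_on {t<..} h" and \<epsilon>: "\<epsilon> \<ge> 0"
    and near: "\<exists>\<delta>>0. \<exists>B. \<forall>r. t < r \<and> r < t + \<delta> \<longrightarrow> norm (h r) \<le> B"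
    and far: "\<exists>R B. \<forall>r\<ge>R. norm (h r) \<le> B * exp (\<epsilon> * (r - t))"
  shows "\<exists>B. \<forall>r>t. norm (h r) \<le> B * exp (\<epsilon> * (r - t))"
proof -
  obtain \<delta> B1 where \<delta>: "\<delta> > 0" and B1: "\<And>r. t < r \<Longrightarrow> r < t + \<delta> \<Longrightarrow> norm (h r) \<le> B1"
    using near by blast
  obtain R B2 where B2: "\<And>r. r \<ge> R \<Longrightarrow> norm (h r) \<le> B2 * exp (\<epsilon> * (r - t))"
    using far by blast
  have "continuous_on {t + \<delta>..R} h" by (rule continuous_on_subset[OF cont]) (use \<delta> in auto)
  then obtain B3 where B3: "\<And>r. r \<in> {t + \<delta>..R} \<Longrightarrow> norm (h r) \<le> B3"
    using continuous_on_compact_bound[OF compact_Icc] by metis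
  define B where "B = max (max B1 B2) (max B3 0)"
  show ?thesis
  proof (intro exI[of _ B] allI impI)
    fix r assume r: "r > t"
    have "1 \<le> exp (\<epsilon> * (r - t))" using \<epsilon> r by simp
    hence B_le: "B \<le> B * exp (\<epsilon> * (r - t))" using mult_left_mono[of 1 _ B] by (simp add: B_def)
    consider "r < t + \<delta>" | "r \<ge> R" | "r \<in> {t + \<delta>..R}" by fastforce
    thus "norm (h r) \<le> B * exp (\<epsilon> * (r - t))"
    proof cases
      case 1
      thus ?thesis using B1[OF r] B_le by (simp add: B_def)
    next
      case 2
      have "B2 * exp (\<epsilon> * (r - t)) \<le> B * exp (\<epsilon> * (r - t))" by (intro mult_right_mono) (auto simp: B_def)
      thus ?thesis using B2[OF 2] by linarith
    next
      case 3
      thus ?thesis using B3 B_le by (fastforce simp: B_def)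
    qed
  qed
qed

lemma bound_at_right_of_pointwise_bound:
  fixes f :: "real \<Rightarrow> 'a::real_normed_vector"
  assumes bound: "\<And>x. x > t \<Longrightarrow> norm (f x) \<le> (\<alpha> + \<gamma> * sqrt (x^2 + a^2)) * ((x - t) powr p * exp (-s * x))"
    and t: "t \<ge> 0" and s: "s \<ge> 0" and \<alpha>: "\<alpha> \<ge> 0" and \<gamma>: "\<gamma> \<ge> 0"
  shows "\<exists>K. \<forall>\<^sub>F x in at_right t. norm (f x) \<le> K * (x - t) powr p"
proof -
  have "\<forall>\<^sub>F x in at_right t. x \<in> {t<..<t + 1}" by (rule eventually_at_right_real) simp
  hence "\<forall>\<^sub>F x in at_right t. norm (f x) \<le> (\<alpha> + \<gamma> * (t + 1 + \<bar>a\<bar>)) * (x - t) powr p"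
  proof eventually_elim
    case (elim x)
    have "sqrt (x^2 + a^2) \<le> x + \<bar>a\<bar>" using sqrt_add_le_add_sqrt[of "x^2" "a^2"] elim t by simp
    hence "\<alpha> + \<gamma> * sqrt (x^2 + a^2) \<le> \<alpha> + \<gamma> * (t + 1 + \<bar>a\<bar>)"
      using elim \<gamma> by (intro add_left_mono mult_left_mono) auto
    moreover have "exp (-s * x) \<le> 1" using s elim t by simp
    ultimately have le: "(\<alpha> + \<gamma> * sqrt (x^2 + a^2)) * ((x - t) powr p * exp (-s * x))
        \<le> (\<alpha> + \<gamma> * (t + 1 + \<bar>a\<bar>)) * ((x - t) powr p * 1)"
      using \<alpha> \<gamma> t by (intro mult_mono mult_left_mono) auto
    from elim have "x > t" by simp
    from order.trans[OF bound[OF this] le] show ?case by (simp only: mult_1_right)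
  qed
  thus ?thesis by blast
qed

lemma bound_at_top_of_pointwise_bound:
  fixes f :: "real \<Rightarrow> 'a::real_normed_vector"
  assumes bound: "\<And>x. x > t \<Longrightarrow> norm (f x) \<le> (\<alpha> + \<gamma> * sqrt (x^2 + a^2)) * ((x - t) powr p * exp (-s * x))"
    and t: "t \<ge> 0" and p: "p \<ge> 0" and \<alpha>: "\<alpha> \<ge> 0" and \<gamma>: "\<gamma> \<ge> 0"
  shows "\<exists>K. \<forall>\<^sub>F x in at_top. norm (f x) \<le> K * exp (-s * x) * x powr (1 + p)"
proof -
  have "\<forall>\<^sub>F x in at_top. x \<ge> max 1 (t + 1)" by (rule eventually_ge_at_top)
  hence "\<forall>\<^sub>F x in at_top. norm (f x) \<le> (\<alpha> + \<gamma> * (1 + \<bar>a\<bar>)) * exp (-s * x) * x powr (1 + p)"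
  proof eventually_elim
    case (elim x)
    hence x: "x \<ge> 1" "x > t" by auto
    have "sqrt (x^2 + a^2) \<le> x + \<bar>a\<bar>" using sqrt_add_le_add_sqrt[of "x^2" "a^2"] x by simp
    moreover have "\<bar>a\<bar> \<le> \<bar>a\<bar> * x" "\<alpha> \<le> \<alpha> * x" using x \<alpha> by (simp_all add: mult_le_cancel_left1)
    ultimately have "\<alpha> + \<gamma> * sqrt (x^2 + a^2) \<le> \<alpha> * x + \<gamma> * ((1 + \<bar>a\<bar>) * x)"
      using \<gamma> by (intro add_mono mult_left_mono) (auto simp: algebra_simps)
    moreover have "(x - t) powr p \<le> x powr p" using x t p by (intro powr_mono2) auto
    ultimately have "(\<alpha> + \<gamma> * sqrt (x^2 + a^2)) * ((x - t) powr p * exp (-s * x))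
        \<le> (\<alpha> + \<gamma> * (1 + \<bar>a\<bar>)) * x * (x powr p * exp (-s * x))"
      using \<alpha> \<gamma> x by (intro mult_mono) (auto simp: algebra_simps)
    also have "\<dots> = (\<alpha> + \<gamma> * (1 + \<bar>a\<bar>)) * exp (-s * x) * x powr (1 + p)"
      using x by (simp add: powr_add ac_simps)
    finally show ?case using order.trans[OF bound[OF x(2)]] by blast
  qed
  thus ?thesis by blast
qed

lemma norm_cpow: "norm (cpow x c) = exp (Re c * ln x)"
  by (simp add: cpow_def)

lemma cpow_mult_cpow_uminus: "cpow x c * cpow x (-c) = 1"
  unfolding cpow_def by (simp add: exp_minus[symmetric] exp_add[symmetric])

lemma continuous_on_cpow [continuous_intros]:
  assumes "continuous_on S f" "\<And>x. x \<in> S \<Longrightarrow> f x > 0"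
  shows "continuous_on S (\<lambda>x. cpow (f x) c)"
  unfolding cpow_def using assms by (intro continuous_intros) force+

lemma has_vector_derivative_cpow:
  assumes "x > t"
  shows "((\<lambda>x. cpow (x - t) b) has_vector_derivative cpow (x - t) b * (b / of_real (x - t))) (at x)"
proof -
  have "((\<lambda>x. b * of_real (ln (x - t))) has_vector_derivative b * of_real (1 / (x - t))) (at x)"
    using assms by (intro has_vector_derivative_mult_right has_vector_derivative_of_real)
                   (auto intro!: derivative_eq_intros)
  from field_vector_diff_chain_at[OF this DERIV_exp]
  show ?thesis unfolding cpow_def o_def by (simp add: of_real_divide mult.commute)
qed

section \<open>Integrals against a decaying exponential kernel\<close>

definition kernel_integral :: "complex \<Rightarrow> real \<Rightarrow> real \<Rightarrow> (real \<Rightarrow> complex) \<Rightarrow> real \<Rightarrow> complex" where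
  "kernel_integral c rp rm g x = (LINT r:{rp<..}|lborel. exp (c * of_real ((x - rm) * (r - rm))) * g r)"

locale decaying_kernel =
  fixes rp rm \<sigma> \<epsilon> B :: real and c :: complex and g :: "real \<Rightarrow> complex"
  assumes rm_less_rp: "rm < rp" and sigma_pos: "\<sigma> > 0"
    and eps_pos: "\<epsilon> > 0" and eps_le: "\<epsilon> \<le> \<sigma> / 8"
    and Re_c: "Re c = -2 * \<sigma> / (rp - rm)"
    and g_cont: "continuous_on {rp<..} g"
    and g_bound: "\<And>r. rp < r \<Longrightarrow> norm (g r) \<le> B * exp ((\<sigma> + \<epsilon>) * (r - rp))"
begin

lemma B_nonneg: "B \<ge> 0"
proof -
  have "0 \<le> B * exp ((\<sigma> + \<epsilon>) * (rp + 1 - rp))"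
    using g_bound[of "rp + 1"] norm_ge_zero[of "g (rp + 1)"] by linarith
  thus ?thesis by (simp add: zero_le_mult_iff)
qed

lemma norm_kernel_le:
  assumes "rp \<le> x" "rp < r"
  shows "norm (exp (c * of_real ((x - rm) * (r - rm)))) \<le> exp (-2 * \<sigma> * (x - rp)) * exp (-2 * \<sigma> * (r - rp))"
proof -
  define \<kappa> where "\<kappa> = rp - rm"
  have \<kappa>: "\<kappa> > 0" using rm_less_rp by (simp add: \<kappa>_def)
  have "(x - rm) * (r - rm) = (x - rp) * (r - rp) + \<kappa> * ((x - rp) + (r - rp)) + \<kappa> * \<kappa>"
    by (simp add: \<kappa>_def algebra_simps)
  also have "\<dots> \<ge> \<kappa> * ((x - rp) + (r - rp))" using assms \<kappa> by simp
  finally have ineq: "\<kappa> * ((x - rp) + (r - rp)) \<le> (x - rm) * (r - rm)" .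
  have "Re c * ((x - rm) * (r - rm)) = -2 * \<sigma> * ((x - rm) * (r - rm)) / \<kappa>"
    by (simp add: Re_c \<kappa>_def)
  also have "\<dots> \<le> -2 * \<sigma> * (\<kappa> * ((x - rp) + (r - rp))) / \<kappa>"
    using ineq sigma_pos \<kappa> by (intro divide_right_mono) auto
  also have "\<dots> = -2 * \<sigma> * (x - rp) + -2 * \<sigma> * (r - rp)" using \<kappa> by (simp add: field_simps)
  finally have "Re c * ((x - rm) * (r - rm)) \<le> -2 * \<sigma> * (x - rp) + -2 * \<sigma> * (r - rp)" .
  thus ?thesis by (simp add: exp_add[symmetric])
qed

lemma sub_rm_le_exp:
  assumes "rp < r"
  shows "r - rm \<le> (1 / \<epsilon> + (rp - rm)) * exp (\<epsilon> * (r - rp))"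
proof -
  have "1 + \<epsilon> * (r - rp) \<le> exp (\<epsilon> * (r - rp))" by (rule exp_ge_add_one_self)
  hence "r - rp \<le> exp (\<epsilon> * (r - rp)) / \<epsilon>" using eps_pos by (simp add: field_simps)
  moreover have "rp - rm \<le> (rp - rm) * exp (\<epsilon> * (r - rp))"
    using assms eps_pos rm_less_rp by simp
  ultimately show ?thesis by (simp add: field_simps)
qed

text \<open>The exponents of r - r_+ combine as -2\<sigma> + (\<sigma> + \<epsilon>) + \<epsilon> + 2\<epsilon> \<le> -\<sigma>/2; this is where
  \<epsilon> \<le> \<sigma>/8 is used.\<close>
lemma kernel_integrand_majorant:
  assumes x: "rp \<le> x" and r: "rp < r" and \<delta>: "0 \<le> \<delta>" "\<delta> * norm c \<le> \<epsilon>"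
  defines "w \<equiv> norm (c * of_real (r - rm))"
  shows "norm (exp (c * of_real ((x - rm) * (r - rm))) * g r) * exp (\<delta> * w) * (1 + w)^2
         \<le> (B * exp (\<epsilon> * (rp - rm)) * (1 + norm c * (1 / \<epsilon> + (rp - rm)))^2)
           * exp (-2 * \<sigma> * (x - rp)) * exp (-(\<sigma> / 2) * (r - rp))"
proof -
  define \<rho> where "\<rho> = r - rp"
  define Q where "Q = 1 + norm c * (1 / \<epsilon> + (rp - rm))"
  have \<rho>: "\<rho> > 0" using r by (simp add: \<rho>_def)
  have w: "w = norm c * (r - rm)"
    using r rm_less_rp by (simp add: w_def norm_mult del: of_real_diff)
  have exp_w: "exp (\<delta> * w) \<le> exp (\<epsilon> * (rp - rm)) * exp (\<epsilon> * \<rho>)"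
  proof -
    have "\<delta> * w \<le> \<epsilon> * (r - rm)"
      unfolding w mult.assoc[symmetric] using \<delta> r rm_less_rp by (intro mult_right_mono) auto
    thus ?thesis by (simp add: \<rho>_def exp_add[symmetric] algebra_simps)
  qed
  have one_w: "1 + w \<le> Q * exp (\<epsilon> * \<rho>)"
  proof -
    have "w \<le> norm c * (1 / \<epsilon> + (rp - rm)) * exp (\<epsilon> * \<rho>)"
      unfolding w \<rho>_def mult.assoc using sub_rm_le_exp[OF r] by (intro mult_left_mono) auto
    moreover have "1 \<le> exp (\<epsilon> * \<rho>)" using eps_pos \<rho> by simp
    moreover have "Q * exp (\<epsilon> * \<rho>) = exp (\<epsilon> * \<rho>) + norm c * (1 / \<epsilon> + (rp - rm)) * exp (\<epsilon> * \<rho>)"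
      by (simp add: Q_def algebra_simps)
    ultimately show ?thesis by linarith
  qed
  have "norm (exp (c * of_real ((x - rm) * (r - rm))) * g r) * exp (\<delta> * w) * (1 + w)^2
      \<le> (exp (-2 * \<sigma> * (x - rp)) * exp (-2 * \<sigma> * \<rho>)) * (B * exp ((\<sigma> + \<epsilon>) * \<rho>))
        * (exp (\<epsilon> * (rp - rm)) * exp (\<epsilon> * \<rho>)) * (Q * exp (\<epsilon> * \<rho>))^2"
    unfolding norm_mult \<rho>_def using norm_kernel_le[OF x r] g_bound[OF r] exp_w one_w B_nonneg
    by (intro mult_mono power_mono) (auto simp: \<rho>_def w_def)
  also have "\<dots> = (B * exp (\<epsilon> * (rp - rm)) * Q^2) * exp (-2 * \<sigma> * (x - rp))
                  * exp ((4 * \<epsilon> - \<sigma>) * \<rho>)"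
    by (simp add: power_mult_distrib exp_add[symmetric] power2_eq_square algebra_simps)
  also have "\<dots> \<le> (B * exp (\<epsilon> * (rp - rm)) * Q^2) * exp (-2 * \<sigma> * (x - rp)) * exp (-(\<sigma> / 2) * \<rho>)"
  proof -
    have "(4 * \<epsilon> - \<sigma>) * \<rho> \<le> -(\<sigma> / 2) * \<rho>" using eps_le \<rho> by (intro mult_right_mono) auto
    thus ?thesis using B_nonneg by (intro mult_left_mono) auto
  qed
  finally show ?thesis by (simp add: Q_def \<rho>_def)
qed

lemma kernel_integral_uniform_decay:
  obtains C where "\<And>h x. continuous_on {rp<..} h \<Longrightarrow> rp \<le> x \<Longrightarrow>
      (\<And>r. rp < r \<Longrightarrow> norm (h r) \<le> norm (g r) * (1 + norm (c * of_real (r - rm)))^2) \<Longrightarrow>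
      norm (kernel_integral c rp rm h x) \<le> C * exp (-2 * \<sigma> * (x - rp))"
proof -
  define K where "K = B * exp (\<epsilon> * (rp - rm)) * (1 + norm c * (1 / \<epsilon> + (rp - rm)))^2"
  define D where "D = (\<lambda>r. exp (-(\<sigma> / 2) * (r - rp)))"
  have D: "set_integrable lborel {rp<..} D"
    unfolding D_def using set_integrable_exp_decay[of "\<sigma> / 2"] sigma_pos by simp
  show ?thesis
  proof (rule that[of "K * (LINT r:{rp<..}|lborel. D r)"])
    fix h :: "real \<Rightarrow> complex" and x :: real
    assume h: "continuous_on {rp<..} h" and x: "rp \<le> x"
      and h_le: "\<And>r. rp < r \<Longrightarrow> norm (h r) \<le> norm (g r) * (1 + norm (c * of_real (r - rm)))^2"
    have "norm (kernel_integral c rp rm h x) \<le> (LINT r:{rp<..}|lborel. (K * exp (-2 * \<sigma> * (x - rp))) * D r)"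
      unfolding kernel_integral_def
    proof (rule set_integrable_continuous_bound(2)[OF _ _ set_integrable_mult_right[OF D]])
      show "continuous_on {rp<..} (\<lambda>r. exp (c * of_real ((x - rm) * (r - rm))) * h r)"
        by (intro continuous_intros h)
      fix r :: real assume r: "r \<in> {rp<..}"
      have "norm (exp (c * of_real ((x - rm) * (r - rm))) * h r)
          \<le> norm (exp (c * of_real ((x - rm) * (r - rm))) * g r) * exp (0 * norm (c * of_real (r - rm)))
            * (1 + norm (c * of_real (r - rm)))^2"
        using mult_left_mono[OF h_le norm_ge_zero, of r "exp (c * of_real ((x - rm) * (r - rm)))"] r
        by (simp add: norm_mult ac_simps)
      thus "norm (exp (c * of_real ((x - rm) * (r - rm))) * h r) \<le> K * exp (-2 * \<sigma> * (x - rp)) * D r"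
        using kernel_integrand_majorant[OF x _ order.refl, of r] r eps_pos by (simp add: K_def D_def)
    qed simp
    thus "norm (kernel_integral c rp rm h x) \<le> K * (LINT r:{rp<..}|lborel. D r) * exp (-2 * \<sigma> * (x - rp))"
      by (simp add: ac_simps)
  qed
qed

lemma kernel_integral_decay:
  "\<exists>C. \<forall>x\<ge>rp. norm (kernel_integral c rp rm g x) \<le> C * exp (-2 * \<sigma> * (x - rp))
        \<and> norm (kernel_integral c rp rm (\<lambda>r. c * of_real (r - rm) * g r) x) \<le> C * exp (-2 * \<sigma> * (x - rp))"
proof -
  obtain C where C: "\<And>h x. continuous_on {rp<..} h \<Longrightarrow> rp \<le> x \<Longrightarrow>
      (\<And>r. rp < r \<Longrightarrow> norm (h r) \<le> norm (g r) * (1 + norm (c * of_real (r - rm)))^2) \<Longrightarrow>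
      norm (kernel_integral c rp rm h x) \<le> C * exp (-2 * \<sigma> * (x - rp))"
    using kernel_integral_uniform_decay by blast
  have sq: "1 \<le> (1 + norm z)^2" "norm z \<le> (1 + norm z)^2" for z :: complex
    by (auto simp: power2_eq_square algebra_simps)
  have "norm (kernel_integral c rp rm g x) \<le> C * exp (-2 * \<sigma> * (x - rp))" if "rp \<le> x" for x
    using g_cont that by (rule C) (metis mult.right_neutral mult_left_mono norm_ge_zero sq(1))
  moreover have "norm (kernel_integral c rp rm (\<lambda>r. c * of_real (r - rm) * g r) x) \<le> C * exp (-2 * \<sigma> * (x - rp))"
    if "rp \<le> x" for x
  proof (rule C[OF _ that])
    show "continuous_on {rp<..} (\<lambda>r. c * of_real (r - rm) * g r)" by (intro continuous_intros g_cont)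
    show "norm (c * of_real (r - rm) * g r) \<le> norm (g r) * (1 + norm (c * of_real (r - rm)))^2" for r
      using mult_left_mono[OF sq(2)[of "c * of_real (r - rm)"] norm_ge_zero[of "g r"]]
      by (simp add: norm_mult ac_simps del: of_real_diff)
  qed
  ultimately show ?thesis by blast
qed

lemma has_vector_derivative_kernel_integral:
  assumes x: "rp \<le> x"
  shows "(kernel_integral c rp rm g has_vector_derivative
           kernel_integral c rp rm (\<lambda>r. c * of_real (r - rm) * g r) x) (at x)"
proof -
  define \<delta> where "\<delta> = \<epsilon> / (norm c + 1)"
  define K where "K = B * exp (\<epsilon> * (rp - rm)) * (1 + norm c * (1 / \<epsilon> + (rp - rm)))^2"
  have c1: "norm c + 1 > 0" by (simp add: add_nonneg_pos)
  have "\<epsilon> * norm c \<le> \<epsilon> * (norm c + 1)" using eps_pos by simp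
  hence \<delta>: "\<delta> > 0" "\<delta> * norm c \<le> \<epsilon>"
    using eps_pos c1 by (auto simp: \<delta>_def divide_le_eq)
  have "((\<lambda>t. LINT r:{rp<..}|lborel.
            exp (of_real (t - x) * (c * of_real (r - rm))) * (exp (c * of_real ((x - rm) * (r - rm))) * g r))
         has_vector_derivative
         (LINT r:{rp<..}|lborel. c * of_real (r - rm) * (exp (c * of_real ((x - rm) * (r - rm))) * g r))) (at x)"
  proof (rule exp_family_majorant.has_vector_derivative_set_integral_exp_family, unfold_locales)
    show "set_integrable lborel {rp<..}
            (\<lambda>r. (K * exp (-2 * \<sigma> * (x - rp))) * exp (-(\<sigma> / 2) * (r - rp)))"
      using set_integrable_exp_decay[of "\<sigma> / 2" rp] sigma_pos by simp
    show "norm (exp (c * of_real ((x - rm) * (r - rm))) * g r) * exp (\<delta> * norm (c * of_real (r - rm)))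
            * (1 + norm (c * of_real (r - rm)))^2
          \<le> K * exp (-2 * \<sigma> * (x - rp)) * exp (-(\<sigma> / 2) * (r - rp))" if "r \<in> {rp<..}" for r
      using kernel_integrand_majorant[OF x _ _ \<delta>(2)] \<delta>(1) that by (simp add: K_def)
  qed (use \<delta> in \<open>auto intro!: continuous_intros g_cont\<close>)
  moreover have "exp (of_real (t - x) * (c * of_real (r - rm))) * exp (c * of_real ((x - rm) * (r - rm)))
      = exp (c * of_real ((t - rm) * (r - rm)))" for t r
    by (simp add: exp_add[symmetric] algebra_simps)
  ultimately show ?thesis
    unfolding kernel_integral_def by (simp add: mult.assoc[symmetric] mult.commute[of _ c]) (simp add: ac_simps)
qed

end

section \<open>Kerr geometry and the weighted radial function\<close>

lemma kerr_horizons: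
  assumes M: "M > 0" and a: "\<bar>a\<bar> < M"
  shows "rminus M a < rplus M a" "0 \<le> rminus M a"
    and "Delta M a x = (x - rplus M a) * (x - rminus M a)"
proof -
  have "a^2 < M^2" using a M by (metis abs_less_iff power2_abs power_strict_mono abs_ge_zero zero_less_numeral)
  hence s2: "sqrt (M^2 - a^2)^2 = M^2 - a^2" and pos: "sqrt (M^2 - a^2) > 0" by simp_all
  have "sqrt (M^2 - a^2) \<le> sqrt (M^2)" by (rule real_sqrt_le_mono) simp
  thus "rminus M a < rplus M a" "0 \<le> rminus M a"
    unfolding rplus_def rminus_def using pos M by auto
  show "Delta M a x = (x - rplus M a) * (x - rminus M a)"
    unfolding rplus_def rminus_def Delta_def using s2 by (simp add: algebra_simps power2_eq_square)
qed

lemma Re_xi_exp: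
  "rminus M a < rplus M a \<Longrightarrow> Re (xi_exp M a \<omega> m) = 2 * M * rplus M a * Im \<omega> / (rplus M a - rminus M a)"
  unfolding xi_exp_def by (simp del: Re_divide)

lemma Delta_div_bounds:
  assumes M: "M > 0" and a: "\<bar>a\<bar> < M" and x: "rplus M a < x"
  shows "0 \<le> Delta M a x / (x^2 + a^2)" "Delta M a x / (x^2 + a^2) \<le> 1"
proof -
  have rm: "rminus M a < rplus M a" "0 \<le> rminus M a"
    and D: "Delta M a x = (x - rplus M a) * (x - rminus M a)" using kerr_horizons[OF M a] by simp_all
  have pos: "x^2 + a^2 > 0" using x rm by (simp add: add_pos_nonneg)
  show "0 \<le> Delta M a x / (x^2 + a^2)" unfolding D using x rm pos by simp
  have "Delta M a x \<le> x^2 + a^2" unfolding Delta_def using M x rm by simp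
  thus "Delta M a x / (x^2 + a^2) \<le> 1" using pos by simp
qed

text \<open>In the paper's notation this is (r - r_-)^\<eta> (r - r_+)^\<xi> R(r), where R(r) is v(r) / sqrt(r^2 + a^2)
  and v(r) = u(r*(r)).\<close>
definition weighted_radial :: "real \<Rightarrow> real \<Rightarrow> real \<Rightarrow> complex \<Rightarrow> complex \<Rightarrow> (real \<Rightarrow> complex) \<Rightarrow> real \<Rightarrow> complex" where
  "weighted_radial a rp rm \<xi> \<eta> v r = cpow (r - rm) \<eta> * cpow (r - rp) \<xi> * (of_real (1 / sqrt (r^2 + a^2)) * v r)"

lemma weighted_radial_bounded_near:
  assumes rm: "rm < rp" "0 \<le> rm" and \<xi>: "Re \<xi> > 0" and \<delta>: "\<delta> > 0"
    and G: "continuous_on {rp..rp + \<delta>} G"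
    and G_eq: "\<And>r. rp < r \<Longrightarrow> r < rp + \<delta> \<Longrightarrow> G r = cpow (r - rp) (-\<xi>) * v r"
  shows "\<exists>\<delta>>0. \<exists>B. \<forall>r. rp < r \<and> r < rp + \<delta> \<longrightarrow> norm (weighted_radial a rp rm \<xi> \<eta> v r) \<le> B"
proof -
  define \<psi> where "\<psi> = (\<lambda>r. cpow (r - rm) \<eta> * of_real (1 / sqrt (r^2 + a^2)) * G r)"
  have "continuous_on {rp..rp + \<delta>} \<psi>"
    unfolding \<psi>_def using rm by (intro continuous_intros G) (auto simp: add_pos_nonneg)
  then obtain B where B: "\<And>r. r \<in> {rp..rp + \<delta>} \<Longrightarrow> norm (\<psi> r) \<le> B"
    using continuous_on_compact_bound[OF compact_Icc] by metis
  have "norm (weighted_radial a rp rm \<xi> \<eta> v r) \<le> B" if r: "rp < r" "r < rp + min \<delta> 1" for r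
  proof -
    have "v r = cpow (r - rp) \<xi> * G r"
      using G_eq[of r] r cpow_mult_cpow_uminus[of "r - rp" \<xi>] by (simp add: mult.assoc[symmetric])
    hence eq: "weighted_radial a rp rm \<xi> \<eta> v r = \<psi> r * (cpow (r - rp) \<xi> * cpow (r - rp) \<xi>)"
      by (simp add: weighted_radial_def \<psi>_def ac_simps)
    have "ln (r - rp) < 0" using r by (intro ln_less_zero) auto
    hence small: "norm (cpow (r - rp) \<xi>) \<le> 1"
      using \<xi> by (simp add: norm_cpow mult_pos_neg less_imp_le)
    have "norm (\<psi> r) \<le> B" using B[of r] r by auto
    hence "norm (\<psi> r) * (norm (cpow (r - rp) \<xi>) * norm (cpow (r - rp) \<xi>)) \<le> B * (1 * 1)"
      using small by (intro mult_mono mult_le_one) (auto intro: order.trans[OF norm_ge_zero])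
    thus ?thesis by (simp add: eq norm_mult)
  qed
  thus ?thesis using \<delta> by (intro exI[of _ "min \<delta> 1"]) auto
qed

lemma weighted_radial_bound_at_top:
  assumes rm: "rm < rp" and \<epsilon>: "\<epsilon> > 0" and v: "\<forall>\<^sub>F r in at_top. norm (v r) \<le> K"
  shows "\<exists>R B. \<forall>r\<ge>R. norm (weighted_radial a rp rm \<xi> \<eta> v r) \<le> B * exp (\<epsilon> * (r - rp))"
proof -
  have "((\<lambda>r. exp (Re \<eta> * ln (r - rm)) * exp (Re \<xi> * ln (r - rp)) / exp (\<epsilon> * (r - rp))) \<longlongrightarrow> 0) at_top"
    using \<epsilon> by real_asymp
  hence powers: "\<forall>\<^sub>F r in at_top. exp (Re \<eta> * ln (r - rm)) * exp (Re \<xi> * ln (r - rp)) \<le> exp (\<epsilon> * (r - rp))"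
    by (rule eventually_mono[OF order_tendstoD(2)[of _ 0 _ 1]]) (auto simp: divide_less_eq)
  have "\<forall>\<^sub>F r in at_top. norm (weighted_radial a rp rm \<xi> \<eta> v r) \<le> K * exp (\<epsilon> * (r - rp))"
    using v powers eventually_ge_at_top[of "max 1 (rp + 1)"]
  proof eventually_elim
    case (elim r)
    have "1 \<le> r^2" using elim by (simp add: one_le_power)
    hence s1: "1 \<le> sqrt (r^2 + a^2)" by (simp add: add_increasing2)
    hence "norm (weighted_radial a rp rm \<xi> \<eta> v r)
        \<le> exp (Re \<eta> * ln (r - rm)) * exp (Re \<xi> * ln (r - rp)) * (1 * norm (v r))"
      using mult_left_mono[OF s1 norm_ge_zero[of "v r"]]
      by (simp add: weighted_radial_def norm_mult norm_divide norm_cpow divide_le_eq)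
    also have "\<dots> \<le> exp (\<epsilon> * (r - rp)) * K"
      using elim by (intro mult_mono) auto
    finally show ?case by (simp add: mult.commute)
  qed
  thus ?thesis unfolding eventually_at_top_linorder by blast
qed

lemma continuous_on_weighted_radial:
  assumes "rm < rp" "0 \<le> rm" "continuous_on {rp<..} v"
  shows "continuous_on {rp<..} (weighted_radial a rp rm \<xi> \<eta> v)"
  unfolding weighted_radial_def using assms by (intro continuous_intros) (auto simp: add_pos_nonneg)

lemma continuous_on_smooth_fun: "smooth_fun f \<Longrightarrow> continuous_on S f"
  unfolding smooth_fun_def
  by (metis continuous_at_imp_continuous_on has_vector_derivative_continuous)

lemma weighted_radial_exp_bound:
  assumes rm: "rm < rp" "0 \<le> rm" and \<xi>: "Re \<xi> > 0" and \<epsilon>: "\<epsilon> > 0"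
    and v: "continuous_on {rp<..} v"
    and near: "\<exists>G \<delta>. \<delta> > 0 \<and> continuous_on {rp..rp + \<delta>} G
                 \<and> (\<forall>r. rp < r \<and> r < rp + \<delta> \<longrightarrow> G r = cpow (r - rp) (-\<xi>) * v r)"
    and far: "\<exists>K. \<forall>\<^sub>F r in at_top. norm (v r) \<le> K"
  shows "\<exists>B. \<forall>r>rp. norm (weighted_radial a rp rm \<xi> \<eta> v r) \<le> B * exp (\<epsilon> * (r - rp))"
proof (rule exp_bound_of_local_bounds)
  show "continuous_on {rp<..} (weighted_radial a rp rm \<xi> \<eta> v)"
    using rm v by (rule continuous_on_weighted_radial)
  show "\<exists>\<delta>>0. \<exists>B. \<forall>r. rp < r \<and> r < rp + \<delta> \<longrightarrow> norm (weighted_radial a rp rm \<xi> \<eta> v r) \<le> B"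
    using near weighted_radial_bounded_near[OF rm \<xi>] by blast
  show "\<exists>R B. \<forall>r\<ge>R. norm (weighted_radial a rp rm \<xi> \<eta> v r) \<le> B * exp (\<epsilon> * (r - rp))"
    using far weighted_radial_bound_at_top[OF rm(1) \<epsilon>] by blast
qed (use \<epsilon> in simp)

text \<open>Only the leading term of the expansion at infinity is needed: it is bounded because
  |exp(i \<omega> r*)| \<le> 1 once r* \<ge> 0.\<close>
lemma bounded_at_top_of_outgoing_expansion:
  fixes u :: "real \<Rightarrow> complex" and rs :: "real \<Rightarrow> real"
  assumes expansion: "\<exists>C :: nat \<Rightarrow> complex. \<forall>N. \<exists>K. \<forall>\<^sub>F r in at_top.
        norm (u (rs r) - exp (\<i> * \<omega> * of_real (rs r)) * (\<Sum>i\<le>N. C i * of_real (r powr (- real i))))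
          \<le> K * r powr (- real (N + 1))"
    and \<omega>: "Im \<omega> \<ge> 0" and rs: "\<forall>\<^sub>F r in at_top. rs r \<ge> 0"
  shows "\<exists>K. \<forall>\<^sub>F r in at_top. norm (u (rs r)) \<le> K"
proof -
  obtain C :: "nat \<Rightarrow> complex" and K where K: "\<forall>\<^sub>F r in at_top.
      norm (u (rs r) - exp (\<i> * \<omega> * of_real (rs r)) * (\<Sum>i\<le>0. C i * of_real (r powr (- real i))))
        \<le> K * r powr (- real (0 + 1))"
    using expansion by blast
  have "\<forall>\<^sub>F r in at_top. norm (u (rs r)) \<le> norm (C 0) + \<bar>K\<bar>"
    using K rs eventually_ge_at_top[of 1]
  proof eventually_elim
    case (elim r)
    have "(\<Sum>i\<le>0. C i * of_real (r powr (- real i))) = C 0" using elim by simp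
    with elim(1) have "norm (u (rs r) - exp (\<i> * \<omega> * of_real (rs r)) * C 0) \<le> K * r powr (- real (0 + 1))"
      by (simp only:)
    moreover have "norm (exp (\<i> * \<omega> * of_real (rs r))) \<le> 1" using elim \<omega> by (simp add: mult_nonneg_nonneg)
    hence "norm (exp (\<i> * \<omega> * of_real (rs r)) * C 0) \<le> norm (C 0)"
      by (simp add: norm_mult mult_left_le_one_le)
    moreover have "K * r powr (- real (0 + 1)) \<le> \<bar>K\<bar>"
    proof -
      have q: "0 \<le> r powr (- real (0 + 1))" "r powr (- real (0 + 1)) \<le> 1"
        using elim by (simp_all add: powr_neg_one)
      have "K * r powr (- real (0 + 1)) \<le> \<bar>K\<bar> * r powr (- real (0 + 1))"
        using q by (intro mult_right_mono) auto
      also have "\<dots> \<le> \<bar>K\<bar> * 1" using q by (intro mult_left_mono) auto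
      finally show ?thesis by (simp only: mult_1_right)
    qed
    ultimately show ?case
      using norm_triangle_sub[of "u (rs r)" "exp (\<i> * \<omega> * of_real (rs r)) * C 0"] by linarith
  qed
  thus ?thesis by blast
qed

lemma mode_weighted_radial_exp_bound:
  fixes u :: "real \<Rightarrow> complex" and rs :: "real \<Rightarrow> real"
  assumes M_pos: "M > 0" and a_lt: "\<bar>a\<bar> < M"
    and rs_mono: "strict_mono_on {rplus M a<..} rs"
    and rs_bij: "bij_betw rs {rplus M a<..} UNIV"
    and v: "continuous_on {rplus M a<..} (\<lambda>r. u (rs r))"
    and bc_hor: "\<exists>G \<delta>. \<delta> > 0 \<and> smooth_fun (G :: real \<Rightarrow> complex) \<and>
        (\<forall>r. rplus M a < r \<and> r < rplus M a + \<delta> \<longrightarrow>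
            G r = cpow (r - rplus M a) (- xi_exp M a \<omega> m) * u (rs r))"
    and bc_inf: "\<exists>C :: nat \<Rightarrow> complex. \<forall>N. \<exists>K. \<forall>\<^sub>F r in at_top.
        norm (u (rs r) - exp (\<i> * \<omega> * complex_of_real (rs r)) * (\<Sum>i\<le>N. C i * of_real (r powr (- real i))))
          \<le> K * r powr (- real (N + 1))"
    and Im_pos: "Im \<omega> > 0" and \<epsilon>: "\<epsilon> > 0"
  shows "\<exists>B. \<forall>r>rplus M a. norm (weighted_radial a (rplus M a) (rminus M a) (xi_exp M a \<omega> m)
           (eta_exp M a \<omega> m) (\<lambda>r. u (rs r)) r) \<le> B * exp (\<epsilon> * (r - rplus M a))"
proof (rule weighted_radial_exp_bound[OF _ _ _ \<epsilon> v])
  show rm: "rminus M a < rplus M a" "0 \<le> rminus M a" using kerr_horizons[OF M_pos a_lt] by simp_all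
  show "Re (xi_exp M a \<omega> m) > 0" using Re_xi_exp[OF rm(1)] rm M_pos Im_pos by simp
  show "\<exists>G \<delta>. \<delta> > 0 \<and> continuous_on {rplus M a..rplus M a + \<delta>} G
      \<and> (\<forall>r. rplus M a < r \<and> r < rplus M a + \<delta> \<longrightarrow> G r = cpow (r - rplus M a) (- xi_exp M a \<omega> m) * u (rs r))"
    using bc_hor continuous_on_smooth_fun by blast
  obtain r0 where r0: "rplus M a < r0" "rs r0 = 0"
    using rs_bij unfolding bij_betw_def by (metis UNIV_I greaterThan_iff imageE)
  have "\<forall>\<^sub>F r in at_top. rs r \<ge> 0"
    using eventually_ge_at_top[of r0] strict_mono_onD[OF rs_mono, of r0] r0
    by (auto elim!: eventually_mono simp: le_less)
  thus "\<exists>K. \<forall>\<^sub>F r in at_top. norm (u (rs r)) \<le> K"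
    using bounded_at_top_of_outgoing_expansion[OF bc_inf] Im_pos by simp
qed

section \<open>Whiting's transform\<close>

definition whiting_prefactor :: "real \<Rightarrow> real \<Rightarrow> complex \<Rightarrow> real \<Rightarrow> complex" where
  "whiting_prefactor M a \<omega> x = of_real (sqrt (x^2 + a^2)) * cpow (x - rplus M a) (- 2 * \<i> * of_real M * \<omega>)
     * exp (- \<i> * \<omega> * of_real x)"

lemma norm_whiting_prefactor:
  assumes "rplus M a < x"
  shows "norm (whiting_prefactor M a \<omega> x)
         = sqrt (x^2 + a^2) * ((x - rplus M a) powr (2 * M * Im \<omega>) * exp (Im \<omega> * x))"
  using assms by (simp add: whiting_prefactor_def norm_mult norm_cpow powr_def)

definition whiting_prefactor_log_deriv :: "real \<Rightarrow> real \<Rightarrow> complex \<Rightarrow> real \<Rightarrow> complex" where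
  "whiting_prefactor_log_deriv M a \<omega> x
     = of_real (x / (x^2 + a^2)) + (- 2 * \<i> * of_real M * \<omega>) / of_real (x - rplus M a) - \<i> * \<omega>"

lemma has_vector_derivative_whiting_prefactor:
  assumes x: "rplus M a < x" "0 < x"
  shows "(whiting_prefactor M a \<omega> has_vector_derivative whiting_prefactor M a \<omega> x
           * whiting_prefactor_log_deriv M a \<omega> x) (at x)"
proof -
  define S where "S = sqrt (x^2 + a^2)"
  define E where "E = exp (- \<i> * \<omega> * of_real x)"
  have S: "S > 0" "S * S = x^2 + a^2" using x by (auto simp: S_def add_pos_nonneg)
  hence xS: "x / S = S * (x / (x^2 + a^2))" unfolding S(2)[symmetric] by (simp add: field_simps)
  have "((\<lambda>x. sqrt (x^2 + a^2)) has_real_derivative x / S) (at x)"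
    using S by (auto intro!: derivative_eq_intros simp: S_def field_simps)
  hence dS: "((\<lambda>x. of_real (sqrt (x^2 + a^2))) has_vector_derivative of_real S * of_real (x / (x^2 + a^2))) (at x)"
    unfolding xS of_real_mult[symmetric] by (rule has_vector_derivative_of_real)
  have "((\<lambda>z. exp (- \<i> * \<omega> * z)) has_field_derivative E * (- \<i> * \<omega>)) (at (of_real x))"
    by (auto intro!: derivative_eq_intros simp: E_def)
  from has_vector_derivative_real_field[OF this]
  have dE: "((\<lambda>x. exp (- \<i> * \<omega> * of_real x)) has_vector_derivative E * (- \<i> * \<omega>)) (at x)" .
  show ?thesis
    unfolding whiting_prefactor_def
    by (rule has_vector_derivative_eq_rhs, rule has_vector_derivative_mult[OF
          has_vector_derivative_mult[OF dS has_vector_derivative_cpow[OF x(1)]] dE])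
       (unfold S_def[symmetric] E_def[symmetric] whiting_prefactor_log_deriv_def, simp add: algebra_simps)
qed

lemma norm_whiting_prefactor_log_deriv_le:
  assumes M: "M > 0" and x: "rplus M a < x" "0 < x"
  shows "norm (whiting_prefactor_log_deriv M a \<omega> x)
         \<le> x / (x^2 + a^2) + 2 * M * norm \<omega> / (x - rplus M a) + norm \<omega>"
  unfolding whiting_prefactor_log_deriv_def using x M
  by (intro order.trans[OF norm_triangle_ineq4] order.trans[OF add_right_mono[OF norm_triangle_ineq]] add_mono)
     (auto simp: norm_mult norm_divide add_nonneg_nonneg simp del: of_real_diff of_real_divide)

text \<open>The factor \<Delta>/(x^2+a^2) = dx/dx* cancels the pole at x = r_+ of the logarithmic
  derivative of the prefactor.\<close>
lemma Delta_div_mult_log_deriv_le: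
  assumes M: "M > 0" and a: "\<bar>a\<bar> < M" and x: "rplus M a < x" and n: "n \<ge> 0"
  defines "S \<equiv> sqrt (x^2 + a^2)" and "d \<equiv> Delta M a x / (x^2 + a^2)"
  shows "d * S * (x / (x^2 + a^2) + 2 * M * n / (x - rplus M a) + n) \<le> 1 + 2 * M * n + n * S"
proof -
  define rp rm where "rp = rplus M a" and "rm = rminus M a"
  have rm: "rm < rp" "0 \<le> rm" and Delta: "Delta M a x = (x - rp) * (x - rm)"
    using kerr_horizons[OF M a] by (simp_all add: rp_def rm_def)
  have xp: "x > rp" "x > 0" using x rm by (simp_all add: rp_def)
  have S: "S > 0" "S * S = x^2 + a^2" "x \<le> S"
    using xp real_sqrt_le_mono[of "x^2" "x^2 + a^2"] by (auto simp: S_def add_pos_nonneg)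
  have d: "d = (x - rp) * (x - rm) / (S * S)" by (simp add: d_def Delta S(2))
  have d_bounds: "0 \<le> d" "d \<le> 1" using Delta_div_bounds[OF M a x] by (simp_all add: d_def)
  have "d * S * (x / (x^2 + a^2)) = d * (x / S)" unfolding S(2)[symmetric] using S(1) by (simp add: field_simps)
  also have "\<dots> \<le> 1" using d_bounds S xp by (intro mult_le_one) (auto simp: divide_le_eq)
  finally have t1: "d * S * (x / (x^2 + a^2)) \<le> 1" .
  have "d * S * (2 * M * n / (x - rp)) = 2 * M * n * ((x - rm) / S)"
    using S(1) xp unfolding d by (simp add: field_simps)
  also have "\<dots> \<le> 2 * M * n" using M S rm xp n by (intro mult_left_le) (auto simp: divide_le_eq)
  finally have t2: "d * S * (2 * M * n / (x - rp)) \<le> 2 * M * n" .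
  have "d * (S * n) \<le> 1 * (S * n)" using d_bounds S(1) n by (intro mult_right_mono) auto
  thus ?thesis using t1 t2 by (simp add: distrib_left rp_def ac_simps)
qed

lemma norm_scaled_whiting_prefactor_deriv:
  assumes M: "M > 0" and a: "\<bar>a\<bar> < M" and x: "rplus M a < x"
  shows "norm (of_real (Delta M a x / (x^2 + a^2)) * (whiting_prefactor M a \<omega> x
            * whiting_prefactor_log_deriv M a \<omega> x))
         \<le> (1 + 2 * M * norm \<omega> + norm \<omega> * sqrt (x^2 + a^2))
           * ((x - rplus M a) powr (2 * M * Im \<omega>) * exp (Im \<omega> * x))"
proof -
  define d L where "d = Delta M a x / (x^2 + a^2)" and "L = whiting_prefactor_log_deriv M a \<omega> x"
  have x0: "0 < x" using x kerr_horizons[OF M a] by simp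
  have d: "0 \<le> d" using Delta_div_bounds[OF M a x] by (simp add: d_def)
  have "d * sqrt (x^2 + a^2) * norm L \<le> d * sqrt (x^2 + a^2)
          * (x / (x^2 + a^2) + 2 * M * norm \<omega> / (x - rplus M a) + norm \<omega>)"
    using norm_whiting_prefactor_log_deriv_le[OF M x x0] d by (intro mult_left_mono) (auto simp: L_def)
  also have "\<dots> \<le> 1 + 2 * M * norm \<omega> + norm \<omega> * sqrt (x^2 + a^2)"
    using Delta_div_mult_log_deriv_le[OF M a x] by (simp add: d_def)
  finally have "d * sqrt (x^2 + a^2) * norm L * ((x - rplus M a) powr (2 * M * Im \<omega>) * exp (Im \<omega> * x))
      \<le> (1 + 2 * M * norm \<omega> + norm \<omega> * sqrt (x^2 + a^2)) * ((x - rplus M a) powr (2 * M * Im \<omega>) * exp (Im \<omega> * x))"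
    by (rule mult_right_mono) simp
  moreover have "norm (of_real d * (whiting_prefactor M a \<omega> x * L))
      = d * sqrt (x^2 + a^2) * norm L * ((x - rplus M a) powr (2 * M * Im \<omega>) * exp (Im \<omega> * x))"
    unfolding norm_mult norm_whiting_prefactor[OF x] norm_of_real abs_of_nonneg[OF d] by (simp only: ac_simps)
  ultimately show ?thesis unfolding d_def[symmetric] L_def[symmetric] by linarith
qed

definition whiting_rate :: "real \<Rightarrow> real \<Rightarrow> complex \<Rightarrow> complex" where
  "whiting_rate M a \<omega> = 2 * \<i> * \<omega> / of_real (rplus M a - rminus M a)"

definition whiting_integrand :: "real \<Rightarrow> real \<Rightarrow> complex \<Rightarrow> int \<Rightarrow> (real \<Rightarrow> real) \<Rightarrow> (real \<Rightarrow> complex) \<Rightarrow> real \<Rightarrow> complex" where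
  "whiting_integrand M a \<omega> m rs u r = exp (- \<i> * \<omega> * of_real r)
     * weighted_radial a (rplus M a) (rminus M a) (xi_exp M a \<omega> m) (eta_exp M a \<omega> m) (\<lambda>r. u (rs r)) r"

lemma whiting_eq_prefactor_kernel_integral:
  "whiting M a \<omega> m rs u x = whiting_prefactor M a \<omega> x
     * kernel_integral (whiting_rate M a \<omega>) (rplus M a) (rminus M a) (whiting_integrand M a \<omega> m rs u) x"
  unfolding whiting_def whiting_prefactor_def kernel_integral_def whiting_rate_def whiting_integrand_def
    weighted_radial_def by (simp add: ac_simps)

text \<open>The factor exp(-i\<omega>r) grows like exp(Im \<omega> r), so the integrand satisfies the growth hypothesis
  of the locale decaying_kernel with \<sigma> = Im \<omega> and \<epsilon> = \<sigma>/8.\<close>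
lemma whiting_kernel_integral_estimates:
  fixes u :: "real \<Rightarrow> complex" and rs :: "real \<Rightarrow> real"
  assumes M: "M > 0" and a: "\<bar>a\<bar> < M" and \<omega>: "Im \<omega> > 0"
    and v: "continuous_on {rplus M a<..} (\<lambda>r. u (rs r))"
    and weight: "\<exists>B. \<forall>r>rplus M a. norm (weighted_radial a (rplus M a) (rminus M a) (xi_exp M a \<omega> m) (eta_exp M a \<omega> m)
                    (\<lambda>r. u (rs r)) r) \<le> B * exp (Im \<omega> / 8 * (r - rplus M a))"
  defines "I \<equiv> kernel_integral (whiting_rate M a \<omega>) (rplus M a) (rminus M a) (whiting_integrand M a \<omega> m rs u)"
    and "I' \<equiv> kernel_integral (whiting_rate M a \<omega>) (rplus M a) (rminus M a)
               (\<lambda>r. whiting_rate M a \<omega> * of_real (r - rminus M a) * whiting_integrand M a \<omega> m rs u r)"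
  obtains C where
    "\<And>x. rplus M a \<le> x \<Longrightarrow> norm (I x) \<le> C * exp (-2 * Im \<omega> * (x - rplus M a))"
    "\<And>x. rplus M a \<le> x \<Longrightarrow> norm (I' x) \<le> C * exp (-2 * Im \<omega> * (x - rplus M a))"
    "\<And>x. rplus M a \<le> x \<Longrightarrow> (I has_vector_derivative I' x) (at x)"
proof -
  define rp rm \<sigma> where "rp = rplus M a" and "rm = rminus M a" and "\<sigma> = Im \<omega>"
  define c g where "c = whiting_rate M a \<omega>" and "g = whiting_integrand M a \<omega> m rs u"
  have rm: "rm < rp" "0 \<le> rm" using kerr_horizons[OF M a] by (simp_all add: rp_def rm_def)
  obtain B where B: "\<And>r. rp < r \<Longrightarrow> norm (weighted_radial a rp rm (xi_exp M a \<omega> m) (eta_exp M a \<omega> m)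
                          (\<lambda>r. u (rs r)) r) \<le> B * exp (\<sigma> / 8 * (r - rp))"
    using weight by (auto simp: rp_def rm_def \<sigma>_def)
  have "decaying_kernel rp rm \<sigma> (\<sigma> / 8) (B * exp (\<sigma> * rp)) c g"
  proof
    show "continuous_on {rp<..} g"
      unfolding g_def whiting_integrand_def rp_def[symmetric] rm_def[symmetric]
      using continuous_on_weighted_radial[OF rm v[folded rp_def]] by (intro continuous_intros)
    fix r assume r: "rp < r"
    have "norm (g r) = exp (\<sigma> * r)
        * norm (weighted_radial a rp rm (xi_exp M a \<omega> m) (eta_exp M a \<omega> m) (\<lambda>r. u (rs r)) r)"
      by (simp add: g_def whiting_integrand_def rp_def rm_def \<sigma>_def norm_mult)
    also have "\<dots> \<le> exp (\<sigma> * r) * (B * exp (\<sigma> / 8 * (r - rp)))" using B[OF r] by simp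
    also have "\<dots> = B * (exp (\<sigma> * r) * exp (\<sigma> / 8 * (r - rp)))" by (simp add: ac_simps)
    also have "exp (\<sigma> * r) * exp (\<sigma> / 8 * (r - rp)) = exp (\<sigma> * rp) * exp ((\<sigma> + \<sigma> / 8) * (r - rp))"
      unfolding exp_add[symmetric] by (rule arg_cong[where f = exp]) (simp add: field_simps)
    also have "B * (exp (\<sigma> * rp) * exp ((\<sigma> + \<sigma> / 8) * (r - rp)))
        = B * exp (\<sigma> * rp) * exp ((\<sigma> + \<sigma> / 8) * (r - rp))" by (simp add: ac_simps)
    finally show "norm (g r) \<le> B * exp (\<sigma> * rp) * exp ((\<sigma> + \<sigma> / 8) * (r - rp))" .
  qed (use rm \<omega> in \<open>auto simp: \<sigma>_def c_def whiting_rate_def rp_def rm_def\<close>)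
  then interpret decaying_kernel rp rm \<sigma> "\<sigma> / 8" "B * exp (\<sigma> * rp)" c g .
  from kernel_integral_decay has_vector_derivative_kernel_integral that show ?thesis
    by (auto simp: I_def I'_def c_def g_def rp_def rm_def \<sigma>_def)
qed

lemma norm_product_rule_bounds:
  fixes A AL I I' :: complex
  assumes d: "0 \<le> d" "d \<le> 1" and A: "norm A = S * P" and AL: "norm (of_real d * AL) \<le> Q * P"
    and I: "norm I \<le> E" "norm I' \<le> E"
  shows "norm (A * I) \<le> S * (P * E)"
    and "norm (of_real d * (A * I' + AL * I)) \<le> (S + Q) * (P * E)"
proof -
  have SP: "0 \<le> S * P" using A by (metis norm_ge_zero)
  show "norm (A * I) \<le> S * (P * E)"
    using mult_left_mono[OF I(1) SP] by (simp add: norm_mult A ac_simps)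
  have "norm (of_real d * (A * I')) \<le> 1 * norm (A * I')"
    unfolding norm_mult[of "of_real d"] using d by (intro mult_right_mono) auto
  also have "\<dots> \<le> S * P * E" using mult_left_mono[OF I(2) SP] by (simp add: norm_mult A)
  finally have AI': "norm (of_real d * (A * I')) \<le> S * P * E" by simp
  have QP: "0 \<le> Q * P" using AL by (metis norm_ge_zero order.trans)
  have "of_real d * (A * I' + AL * I) = of_real d * (A * I') + (of_real d * AL) * I"
    by (simp add: algebra_simps)
  hence "norm (of_real d * (A * I' + AL * I)) \<le> norm (of_real d * (A * I')) + norm (of_real d * AL) * norm I"
    by (metis norm_mult norm_triangle_ineq)
  also have "\<dots> \<le> S * P * E + Q * P * E" using AI' mult_mono[OF AL I(1) QP norm_ge_zero] by (rule add_mono)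
  finally show "norm (of_real d * (A * I' + AL * I)) \<le> (S + Q) * (P * E)" by (simp add: algebra_simps)
qed

lemma whiting_pointwise_bounds:
  fixes u :: "real \<Rightarrow> complex" and rs :: "real \<Rightarrow> real"
  assumes M: "M > 0" and a: "\<bar>a\<bar> < M" and \<omega>: "Im \<omega> > 0"
    and v: "continuous_on {rplus M a<..} (\<lambda>r. u (rs r))"
    and weight: "\<exists>B. \<forall>r>rplus M a. norm (weighted_radial a (rplus M a) (rminus M a) (xi_exp M a \<omega> m) (eta_exp M a \<omega> m)
                    (\<lambda>r. u (rs r)) r) \<le> B * exp (Im \<omega> / 8 * (r - rplus M a))"
  obtains K W' where "K \<ge> 0"
    and "\<And>x. rplus M a < x \<Longrightarrow> (whiting M a \<omega> m rs u has_vector_derivative W' x) (at x)"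
    and "\<And>x. rplus M a < x \<Longrightarrow> norm (whiting M a \<omega> m rs u x)
           \<le> K * sqrt (x^2 + a^2) * ((x - rplus M a) powr (2 * M * Im \<omega>) * exp (- Im \<omega> * x))"
    and "\<And>x. rplus M a < x \<Longrightarrow> norm (of_real (Delta M a x / (x^2 + a^2)) * W' x)
           \<le> (K * (1 + 2 * M * norm \<omega>) + K * (norm \<omega> + 1) * sqrt (x^2 + a^2))
             * ((x - rplus M a) powr (2 * M * Im \<omega>) * exp (- Im \<omega> * x))"
proof -
  define I I' where "I = kernel_integral (whiting_rate M a \<omega>) (rplus M a) (rminus M a) (whiting_integrand M a \<omega> m rs u)"
    and "I' = kernel_integral (whiting_rate M a \<omega>) (rplus M a) (rminus M a)
               (\<lambda>r. whiting_rate M a \<omega> * of_real (r - rminus M a) * whiting_integrand M a \<omega> m rs u r)"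
  obtain C where C: "\<And>x. rplus M a \<le> x \<Longrightarrow> norm (I x) \<le> C * exp (-2 * Im \<omega> * (x - rplus M a))"
      "\<And>x. rplus M a \<le> x \<Longrightarrow> norm (I' x) \<le> C * exp (-2 * Im \<omega> * (x - rplus M a))"
      "\<And>x. rplus M a \<le> x \<Longrightarrow> (I has_vector_derivative I' x) (at x)"
    using whiting_kernel_integral_estimates[where u = u and rs = rs and m = m, OF M a \<omega> v weight]
    unfolding I_def I'_def by blast
  define rp \<sigma> where "rp = rplus M a" and "\<sigma> = Im \<omega>"
  define A where "A = whiting_prefactor M a \<omega>"
  define L where "L = whiting_prefactor_log_deriv M a \<omega>"
  define K where "K = C * exp (2 * \<sigma> * rp)"
  have "C \<ge> 0" using C(1)[of "rplus M a"] order.trans[OF norm_ge_zero] by simp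
  hence K: "K \<ge> 0" by (simp add: K_def)
  have W: "whiting M a \<omega> m rs u = (\<lambda>x. A x * I x)"
    by (simp add: fun_eq_iff whiting_eq_prefactor_kernel_integral A_def I_def)
  show ?thesis
  proof (rule that[OF K])
    fix x assume x: "rplus M a < x"
    have xp: "0 < x" using x kerr_horizons[OF M a] by simp
    define S P E where "S = sqrt (x^2 + a^2)" and "P = (x - rp) powr (2 * M * \<sigma>)"
      and "E = C * exp (-2 * \<sigma> * (x - rp))"
    have "P * exp (\<sigma> * x) * E = C * P * (exp (\<sigma> * x) * exp (-2 * \<sigma> * (x - rp)))"
      by (simp only: E_def ac_simps)
    also have "exp (\<sigma> * x) * exp (-2 * \<sigma> * (x - rp)) = exp (2 * \<sigma> * rp) * exp (- \<sigma> * x)"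
      unfolding exp_add[symmetric] by (rule arg_cong[where f = exp]) (simp add: algebra_simps)
    finally have PE: "P * exp (\<sigma> * x) * E = K * (P * exp (- \<sigma> * x))" by (simp only: K_def ac_simps)
    have d: "0 \<le> Delta M a x / (x^2 + a^2)" "Delta M a x / (x^2 + a^2) \<le> 1"
      using Delta_div_bounds[OF M a x] by simp_all
    have nA: "norm (A x) = S * (P * exp (\<sigma> * x))"
      using norm_whiting_prefactor[OF x] by (simp add: A_def S_def P_def rp_def \<sigma>_def)
    have nAL: "norm (of_real (Delta M a x / (x^2 + a^2)) * (A x * L x))
        \<le> (1 + 2 * M * norm \<omega> + norm \<omega> * S) * (P * exp (\<sigma> * x))"
      using norm_scaled_whiting_prefactor_deriv[OF M a x] by (simp add: A_def L_def S_def P_def rp_def \<sigma>_def)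
    have nI: "norm (I x) \<le> E" "norm (I' x) \<le> E" using C x by (auto simp: E_def rp_def \<sigma>_def)
    note estimates = norm_product_rule_bounds[OF d nA nAL nI, unfolded PE]
    show "(whiting M a \<omega> m rs u has_vector_derivative A x * I' x + A x * L x * I x) (at x)"
      using has_vector_derivative_whiting_prefactor[OF x xp] C(3)[OF less_imp_le[OF x]]
      unfolding W A_def L_def rp_def by (rule has_vector_derivative_mult)
    show "norm (whiting M a \<omega> m rs u x) \<le> K * sqrt (x^2 + a^2)
        * ((x - rplus M a) powr (2 * M * Im \<omega>) * exp (- Im \<omega> * x))"
      using estimates(1) by (simp add: W S_def P_def rp_def \<sigma>_def ac_simps)
    show "norm (of_real (Delta M a x / (x^2 + a^2)) * (A x * I' x + A x * L x * I x))
        \<le> (K * (1 + 2 * M * norm \<omega>) + K * (norm \<omega> + 1) * sqrt (x^2 + a^2))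
          * ((x - rplus M a) powr (2 * M * Im \<omega>) * exp (- Im \<omega> * x))"
      using estimates(2) by (simp add: S_def P_def rp_def \<sigma>_def algebra_simps)
  qed
qed

theorem mainTheorem7:
  fixes M a :: real and \<omega> lam :: complex and m :: int
    and rs :: "real \<Rightarrow> real" and F :: "real \<Rightarrow> complex"
    and u du ddu :: "real \<Rightarrow> complex"
  assumes M_pos: "M > 0" and a_lt: "\<bar>a\<bar> < M"
    and rs_mono: "strict_mono_on {rplus M a<..} rs"
    and rs_bij: "bij_betw rs {rplus M a<..} UNIV"
    and rs_deriv: "\<And>r. r > rplus M a \<Longrightarrow>
        (rs has_real_derivative (r^2 + a^2) / Delta M a r) (at r)"
    and F_smooth: "smooth_fun F"
    and F_supp: "\<exists>c d. rplus M a < c \<and> c \<le> d \<and> (\<forall>r. r \<notin> {c..d} \<longrightarrow> F r = 0)"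
    and u_d1: "\<And>s. (u has_vector_derivative du s) (at s)"
    and u_d2: "\<And>s. (du has_vector_derivative ddu s) (at s)"
    and ode: "\<And>r. r > rplus M a \<Longrightarrow>
        ddu (rs r) + (\<omega>^2 - Vpot M a \<omega> m lam r) * u (rs r)
          = complex_of_real (Delta M a r / sqrt (r^2 + a^2)) * F r"
    and bc_hor: "\<exists>G \<delta>. \<delta> > 0 \<and> smooth_fun (G :: real \<Rightarrow> complex) \<and>
        (\<forall>r. rplus M a < r \<and> r < rplus M a + \<delta> \<longrightarrow>
            G r = cpow (r - rplus M a) (- xi_exp M a \<omega> m) * u (rs r))"
    and bc_inf: "\<exists>C :: nat \<Rightarrow> complex. \<forall>N. \<exists>K. \<forall>\<^sub>F r in at_top.
        norm (u (rs r) - exp (\<i> * \<omega> * complex_of_real (rs r)) * (\<Sum>i\<le>N. C i * of_real (r powr (- real i))))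
          \<le> K * r powr (- real (N + 1))"
    and Im_pos: "Im \<omega> > 0"
  shows "(\<exists>K. \<forall>\<^sub>F x in at_right (rplus M a).
            norm (whiting M a \<omega> m rs u x) \<le> K * (x - rplus M a) powr (2 * M * Im \<omega>))
       \<and> (\<exists>K. \<forall>\<^sub>F x in at_top.
            norm (whiting M a \<omega> m rs u x) \<le> K * exp (- Im \<omega> * x) * x powr (1 + 2 * M * Im \<omega>))
       \<and> (\<exists>du_t :: real \<Rightarrow> complex.
            (\<forall>x > rplus M a. (whiting M a \<omega> m rs u has_vector_derivative du_t x) (at x))
          \<and> (\<exists>K. \<forall>\<^sub>F x in at_right (rplus M a).
               norm (complex_of_real (Delta M a x / (x^2 + a^2)) * du_t x) \<le> K * (x - rplus M a) powr (2 * M * Im \<omega>))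
          \<and> (\<exists>K. \<forall>\<^sub>F x in at_top.
               norm (complex_of_real (Delta M a x / (x^2 + a^2)) * du_t x)
                 \<le> K * exp (- Im \<omega> * x) * x powr (1 + 2 * M * Im \<omega>)))"
proof -
  have v: "continuous_on {rplus M a<..} (\<lambda>r. u (rs r))"
    by (intro continuous_at_imp_continuous_on ballI isCont_o2[OF DERIV_isCont[OF rs_deriv]]
              has_vector_derivative_continuous[OF u_d1]) auto
  have weight: "\<exists>B. \<forall>r>rplus M a. norm (weighted_radial a (rplus M a) (rminus M a) (xi_exp M a \<omega> m)
      (eta_exp M a \<omega> m) (\<lambda>r. u (rs r)) r) \<le> B * exp (Im \<omega> / 8 * (r - rplus M a))"
    using Im_pos by (intro mode_weighted_radial_exp_bound[OF M_pos a_lt rs_mono rs_bij v bc_hor bc_inf]) auto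
  obtain K W' where K: "K \<ge> 0"
    and W': "\<And>x. rplus M a < x \<Longrightarrow> (whiting M a \<omega> m rs u has_vector_derivative W' x) (at x)"
    and bound_W: "\<And>x. rplus M a < x \<Longrightarrow> norm (whiting M a \<omega> m rs u x)
           \<le> K * sqrt (x^2 + a^2) * ((x - rplus M a) powr (2 * M * Im \<omega>) * exp (- Im \<omega> * x))"
    and bound_W': "\<And>x. rplus M a < x \<Longrightarrow> norm (of_real (Delta M a x / (x^2 + a^2)) * W' x)
           \<le> (K * (1 + 2 * M * norm \<omega>) + K * (norm \<omega> + 1) * sqrt (x^2 + a^2))
             * ((x - rplus M a) powr (2 * M * Im \<omega>) * exp (- Im \<omega> * x))"
    using whiting_pointwise_bounds[where u = u and rs = rs, OF M_pos a_lt Im_pos v weight] by blast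
  have rp: "0 \<le> rplus M a" and p: "0 \<le> 2 * M * Im \<omega>" and s: "0 \<le> Im \<omega>"
    using kerr_horizons[OF M_pos a_lt] M_pos Im_pos by auto
  have bound_W0: "\<And>x. rplus M a < x \<Longrightarrow> norm (whiting M a \<omega> m rs u x)
      \<le> (0 + K * sqrt (x^2 + a^2)) * ((x - rplus M a) powr (2 * M * Im \<omega>) * exp (- Im \<omega> * x))"
    using bound_W by simp
  show ?thesis
    using bound_at_right_of_pointwise_bound[OF bound_W0 rp s] bound_at_top_of_pointwise_bound[OF bound_W0 rp p]
      bound_at_right_of_pointwise_bound[OF bound_W' rp s] bound_at_top_of_pointwise_bound[OF bound_W' rp p]
      W' K M_pos by auto
qed

end
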